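(* Let $a,b$ be positive integers. A positive integer $p$ is the period of some position of the parallel chip-firing game on $K_{a,b}$ if and only if $p\in\{i: 1\le i\le\min(a,b)\}\cup\{2i: 1\le i\le\min(a,b)\}$.
   Context: Parallel chip-firing game: a position $\sigma$ assigns a nonnegative integer to each vertex; in each step every vertex $v$ with $\sigma(v)\ge\deg(v)$ simultaneously sends one chip to each neighbor. $K_{a,b}$ is the complete bipartite graph with sides of sizes $a$ and $b$. The period $p(\sigma)$ is the least positive integer $p$ such that $U^{t+p}\sigma=U^t\sigma$ for all sufficiently large $t$, where $U$ is the step operator. *)

theory Defs
  imports Main
begin

text \<open>A finite simple graph is given by a vertex set V and a symmetric irreflexive
  adjacency relation E (only its restriction to V matters).\<close>

definition deg :: "'v set \<Rightarrow> ('v \<Rightarrow> 'v \<Rightarrow> bool) \<Rightarrow> 'v \<Rightarrow> nat" where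
  "deg V E v = card {u \<in> V. E v u}"

definition cf_step :: "'v set \<Rightarrow> ('v \<Rightarrow> 'v \<Rightarrow> bool) \<Rightarrow> ('v \<Rightarrow> nat) \<Rightarrow> ('v \<Rightarrow> nat)" where
  "cf_step V E \<sigma> = (\<lambda>v. if v \<in> V then
      \<sigma> v - (if deg V E v \<le> \<sigma> v then deg V E v else 0)
        + card {u \<in> V. E u v \<and> deg V E u \<le> \<sigma> u}
    else \<sigma> v)"

definition eventual_period :: "'v set \<Rightarrow> ('v \<Rightarrow> 'v \<Rightarrow> bool) \<Rightarrow> ('v \<Rightarrow> nat) \<Rightarrow> nat \<Rightarrow> bool" where
  "eventual_period V E \<sigma> p \<longleftrightarrow> 0 < p \<and>
     (\<exists>t0. \<forall>t\<ge>t0. (cf_step V E ^^ (t + p)) \<sigma> = (cf_step V E ^^ t) \<sigma>)"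

definition is_period :: "'v set \<Rightarrow> ('v \<Rightarrow> 'v \<Rightarrow> bool) \<Rightarrow> ('v \<Rightarrow> nat) \<Rightarrow> nat \<Rightarrow> bool" where
  "is_period V E \<sigma> p \<longleftrightarrow> eventual_period V E \<sigma> p \<and>
     (\<forall>q. 0 < q \<and> q < p \<longrightarrow> \<not> eventual_period V E \<sigma> q)"

definition Kab_V :: "nat \<Rightarrow> nat \<Rightarrow> (nat + nat) set" where
  "Kab_V a b = Inl ` {..<a} \<union> Inr ` {..<b}"

definition Kab_E :: "(nat + nat) \<Rightarrow> (nat + nat) \<Rightarrow> bool" where
  "Kab_E u v \<longleftrightarrow> isl u \<noteq> isl v"

end

theory Submission
  imports Defs
begin

text \<open>
  Necessity. Take a state on the limit cycle of a position of period p. If some vertex fires at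
  every step of the cycle, a telescoping argument shows that all vertices do, so the state is
  fixed and p = 1. Otherwise every vertex eventually stays below twice its degree, and firing
  amounts to reduction modulo the degree. The cumulative number of firings of a side is then a
  sum of floors of the cumulative inflow it received, so the cumulative inflow D of the left side
  satisfies D(t+2) = G(D t) for a monotone map G commuting with translation by b (a lift of a
  circle map). A first-return argument for such lifts gives D(t + 2k) = D t + m*b with
  k <= min(a,b); hence 2k is an eventual period and p divides 2k.

  Sufficiency. For 1 <= d <= min(a,b) and e in {1,2}, an explicit rotor configuration, in which
  d groups on each side fire alternately in cyclic order, has exact period e*d.
\<close>

section \<open>Monotone lifts of circle maps\<close>

lemma shift_mult:
  fixes F :: "int \<Rightarrow> int"
  assumes shift: "\<And>z. F (z + c) = F z + e"
  shows "F (z + m * c) = F z + m * e"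
proof (induction m rule: int_induct[where k=0])
  case base
  then show ?case by simp
next
  case (step1 i)
  have "F (z + (i + 1) * c) = F ((z + i * c) + c)" by (simp add: algebra_simps)
  also have "\<dots> = F (z + i * c) + e" by (rule shift)
  also have "\<dots> = F z + (i + 1) * e" using step1 by (simp add: algebra_simps)
  finally show ?case .
next
  case (step2 i)
  have "F z + i * e = F (z + (i - 1) * c + c)" using step2 by (simp add: algebra_simps)
  also have "\<dots> = F (z + (i - 1) * c) + e" by (rule shift)
  finally show ?case by (simp add: algebra_simps)
qed

lemma funpow_shift:
  fixes G :: "int \<Rightarrow> int"
  assumes shift: "\<And>z. G (z + b) = G z + b"
  shows "(G ^^ n) (z + m * b) = (G ^^ n) z + m * b"
  by (induction n arbitrary: z) (simp_all add: shift_mult[of G b b, OF shift])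

lemma cong_iff_translate:
  fixes x y b :: int
  shows "x mod b = y mod b \<longleftrightarrow> (\<exists>n. y = x + n * b)"
proof -
  have "x mod b = y mod b \<longleftrightarrow> b dvd y - x" using mod_eq_dvd_iff dvd_diff_commute by blast
  also have "\<dots> \<longleftrightarrow> (\<exists>n. y = x + n * b)" by (auto simp: dvd_def algebra_simps)
  finally show ?thesis .
qed

lemma translate_iterate:
  fixes H :: "int \<Rightarrow> int"
  assumes shift: "\<And>z. H (z + b) = H z + b" and ret: "H u = u + m * b"
  shows "(H ^^ n) u = u + int n * m * b"
proof (induction n)
  case 0
  then show ?case by simp
next
  case (Suc n)
  have "(H ^^ Suc n) u = H (u + (int n * m) * b)" using Suc by simp
  also have "\<dots> = H u + (int n * m) * b" using shift_mult[of H b b, OF shift] by simp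
  finally show ?case using ret by (simp add: algebra_simps)
qed

lemma drift_iterate:
  fixes H :: "int \<Rightarrow> int"
  assumes mono: "mono H" and shift: "\<And>z. H (z + b) = H z + b"
  shows "H u > u + m * b \<Longrightarrow> (H ^^ Suc j) u > u + int (Suc j) * m * b"
    and "H u < u + m * b \<Longrightarrow> (H ^^ Suc j) u < u + int (Suc j) * m * b"
proof (induction j)
  case (Suc j)
  have step: "(H ^^ Suc (Suc j)) u = H ((H ^^ Suc j) u)" by simp
  have transl: "H (u + (int (Suc j) * m) * b) = H u + (int (Suc j) * m) * b"
    using shift_mult[of H b b, OF shift] by simp
  { case 1
    have "(H ^^ Suc (Suc j)) u \<ge> H (u + (int (Suc j) * m) * b)"
      unfolding step using Suc.IH(1)[OF 1] by (intro monoD[OF mono]) (simp add: algebra_simps)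
    then show ?case using 1 transl by (simp add: algebra_simps) }
  { case 2
    have "(H ^^ Suc (Suc j)) u \<le> H (u + (int (Suc j) * m) * b)"
      unfolding step using Suc.IH(2)[OF 2] by (intro monoD[OF mono]) (simp add: algebra_simps)
    then show ?case using 2 transl by (simp add: algebra_simps) }
qed simp_all

lemma translation_root:
  fixes G :: "int \<Rightarrow> int"
  assumes mono: "mono G" and shift: "\<And>z. G (z + b) = G z + b"
    and g: "g > 0" and ret: "(G ^^ (g * k)) u = u + (int g * m) * b"
  shows "(G ^^ k) u = u + m * b"
proof (rule ccontr)
  let ?H = "G ^^ k"
  have H_mono: "mono ?H" by (rule mono_pow[OF mono])
  have H_shift: "?H (z + b) = ?H z + b" for z using funpow_shift[of G b, OF shift, of k z 1] by simp
  have H_pow: "(?H ^^ g) u = u + int g * m * b" using ret by (simp add: funpow_mult mult.commute)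
  assume "?H u \<noteq> u + m * b"
  then consider "?H u > u + m * b" | "?H u < u + m * b" by linarith
  then show False
  proof cases
    case 1
    from drift_iterate(1)[OF H_mono H_shift 1, of "g - 1"] show False using g H_pow by simp
  next
    case 2
    from drift_iterate(2)[OF H_mono H_shift 2, of "g - 1"] show False using g H_pow by simp
  qed
qed

text \<open>A monotone lift has at most one rotation number: two periodic points of the same period are
  translated by the same multiple of b.\<close>

lemma translation_number_unique:
  fixes G :: "int \<Rightarrow> int"
  assumes mono: "mono G" and shift: "\<And>z. G (z + b) = G z + b" and b: "b > 0"
    and ret_u: "(G ^^ N) u = u + M1 * b" and ret_w: "(G ^^ N) w = w + M2 * b"
  shows "M1 = M2"
proof -
  let ?H = "G ^^ (2 * N)"
  have H_mono: "mono ?H" by (rule mono_pow[OF mono])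
  have H_shift: "?H (z + j * b) = ?H z + j * b" for z j by (rule funpow_shift[of G b, OF shift])
  have H_twice: "?H z = (G ^^ N) ((G ^^ N) z)" for z by (simp add: mult_2 funpow_add)
  have Hu: "?H u = u + 2 * M1 * b"
    using H_twice[of u] ret_u funpow_shift[of G b, OF shift, of N u M1] by (simp add: algebra_simps)
  have Hw: "?H w = w + 2 * M2 * b"
    using H_twice[of w] ret_w funpow_shift[of G b, OF shift, of N w M2] by (simp add: algebra_simps)
  define j where "j = (w - u) div b"
  have j_low: "u + j * b \<le> w" and j_high: "w < u + (j + 1) * b"
  proof -
    have "w - u = b * j + (w - u) mod b" unfolding j_def by simp
    moreover have "0 \<le> (w - u) mod b" "(w - u) mod b < b" using b by simp_all
    ultimately show "u + j * b \<le> w" "w < u + (j + 1) * b" by (simp_all add: algebra_simps)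
  qed
  have "?H u + j * b \<le> ?H w" using monoD[OF H_mono j_low] H_shift[of u j] by simp
  then have "2 * (M1 - M2) * b < b" using Hu Hw j_high by (simp add: algebra_simps)
  then have less: "2 * (M1 - M2) < 1" using b by (simp add: mult_less_cancel_right)
  have "?H w \<le> ?H u + (j + 1) * b" using monoD[OF H_mono, of w "u + (j + 1) * b"] j_high H_shift[of u "j + 1"] by simp
  then have "2 * (M2 - M1) * b \<le> b" using Hu Hw j_low by (simp add: algebra_simps)
  then have "2 * (M2 - M1) \<le> 1" using b by (simp add: mult_le_cancel_right1)
  with less show ?thesis by presburger
qed

lemma cong_propagates:
  fixes G :: "int \<Rightarrow> int"
  assumes shift: "\<And>z. G (z + b) = G z + b"
    and cong: "(G ^^ i) u mod b = (G ^^ j) u mod b"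
  shows "(G ^^ (m + i)) u mod b = (G ^^ (m + j)) u mod b"
proof -
  obtain n where n: "(G ^^ j) u = (G ^^ i) u + n * b" using cong cong_iff_translate by blast
  have "(G ^^ (m + j)) u = (G ^^ m) ((G ^^ i) u + n * b)" by (simp add: funpow_add n)
  also have "\<dots> = (G ^^ (m + i)) u + n * b" by (simp add: funpow_shift[of G b, OF shift] funpow_add)
  finally show ?thesis by simp
qed

lemma no_early_return:
  fixes G :: "int \<Rightarrow> int"
  assumes shift: "\<And>z. G (z + b) = G z + b"
    and ret: "(G ^^ k) u mod b = u mod b"
    and least: "\<And>j. 0 < j \<Longrightarrow> j < k \<Longrightarrow> (G ^^ j) u mod b \<noteq> u mod b"
    and ij: "i < j" "i \<le> k" "j - i < k"
  shows "(G ^^ i) u mod b \<noteq> (G ^^ j) u mod b"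
proof
  assume "(G ^^ i) u mod b = (G ^^ j) u mod b"
  from cong_propagates[OF shift this, of "k - i"]
  have "(G ^^ (k - i + i)) u mod b = (G ^^ (k - i + j)) u mod b" .
  moreover have "k - i + i = k" "k - i + j = (j - i) + k" using ij by simp_all
  ultimately have "(G ^^ k) u mod b = (G ^^ ((j - i) + k)) u mod b" by simp
  also have "\<dots> = (G ^^ (j - i)) u mod b"
    using cong_propagates[of G b, OF shift, of 0 u k "j - i"] ret by simp
  finally show False using ret least[of "j - i"] ij by simp
qed

text \<open>The first return time modulo b of an orbit of G = FB o FA, where FA and FB transport
  translations by b and a into each other, is at most min(a,b): the k residues of the orbit
  modulo b are distinct, and so are the k residues of its FA-images modulo a.\<close>

lemma return_time_bounds:
  fixes G FA FB :: "int \<Rightarrow> int" and a b k :: nat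
  assumes comp: "\<And>z. G z = FB (FA z)"
    and shift_A: "\<And>z. FA (z + int b) = FA z + int a"
    and shift_B: "\<And>z. FB (z + int a) = FB z + int b"
    and a: "a > 0" and b: "b > 0"
    and ret: "(G ^^ k) u mod int b = u mod int b"
    and least: "\<And>j. 0 < j \<Longrightarrow> j < k \<Longrightarrow> (G ^^ j) u mod int b \<noteq> u mod int b"
  shows "k \<le> a" and "k \<le> b"
proof -
  have shift: "G (z + int b) = G z + int b" for z by (simp add: comp shift_A shift_B)
  note distinct = no_early_return[of G "int b", OF shift ret least]
  have "inj_on (\<lambda>i. (G ^^ i) u mod int b) {..<k}"
    by (rule linorder_inj_onI') (use distinct in auto)
  then have "card {..<k} \<le> card {0..<int b}"
    by (rule card_inj_on_le) (auto simp: b)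
  then show "k \<le> b" by simp
  have "inj_on (\<lambda>i. FA ((G ^^ i) u) mod int a) {..<k}"
  proof (rule linorder_inj_onI', rule notI)
    fix x y assume xy: "x \<in> {..<k}" "y \<in> {..<k}" "x < y"
      and "FA ((G ^^ x) u) mod int a = FA ((G ^^ y) u) mod int a"
    then obtain n where "FA ((G ^^ y) u) = FA ((G ^^ x) u) + n * int a"
      using cong_iff_translate by blast
    then have "(G ^^ Suc y) u = (G ^^ Suc x) u + n * int b"
      using shift_mult[of FB "int a" "int b", OF shift_B] by (simp add: comp)
    then have "(G ^^ Suc x) u mod int b = (G ^^ Suc y) u mod int b"
      using cong_iff_translate by blast
    with distinct[of "Suc x" "Suc y"] xy show False by simp
  qed
  then have "card {..<k} \<le> card {0..<int a}"
    by (rule card_inj_on_le) (auto simp: a)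
  then show "k \<le> a" by simp
qed

lemma common_return:
  fixes G FA FB :: "int \<Rightarrow> int" and a b :: nat
  assumes comp: "\<And>z. G z = FB (FA z)"
    and mono_A: "mono FA" and mono_B: "mono FB"
    and shift_A: "\<And>z. FA (z + int b) = FA z + int a"
    and shift_B: "\<And>z. FB (z + int a) = FB z + int b"
    and a: "a > 0" and b: "b > 0"
    and K: "K > 0" and ret_u: "(G ^^ K) u = u + M1 * int b"
    and ret_w: "(G ^^ K) w = w + M2 * int b"
  shows "\<exists>k m. 0 < k \<and> k \<le> a \<and> k \<le> b \<and> (G ^^ k) u = u + m * int b \<and> (G ^^ k) w = w + m * int b"
proof -
  have mono: "mono G" using mono_A mono_B by (simp add: mono_def comp)
  have shift: "G (z + int b) = G z + int b" for z by (simp add: comp shift_A shift_B)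
  have shift_pow: "(G ^^ n) (z + int b) = (G ^^ n) z + int b" for n z
    using funpow_shift[of G "int b", OF shift, of n z 1] by simp
  define Q where "Q j \<longleftrightarrow> 0 < j \<and> (G ^^ j) u mod int b = u mod int b" for j
  have "Q K" using K ret_u by (simp add: Q_def)
  define k where "k = (LEAST j. Q j)"
  have "Q k" unfolding k_def by (rule LeastI[of Q, OF \<open>Q K\<close>])
  then have k: "0 < k" and ret: "(G ^^ k) u mod int b = u mod int b" by (simp_all add: Q_def)
  have least: "(G ^^ j) u mod int b \<noteq> u mod int b" if "0 < j" "j < k" for j
    using not_less_Least[of j Q] that by (auto simp: Q_def k_def)
  note bounds = return_time_bounds[where G=G and FA=FA and FB=FB, OF comp shift_A shift_B a b ret least]
  obtain m where ret_k: "(G ^^ k) u = u + m * int b"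
    using ret cong_iff_translate[of u "int b"] by metis
  have u_Kk: "(G ^^ (K * k)) u = u + int K * m * int b"
    using translate_iterate[of "G ^^ k" "int b" u m K, OF shift_pow ret_k]
    by (simp add: funpow_mult mult.commute)
  have w_Kk: "(G ^^ (K * k)) w = w + int k * M2 * int b"
    using translate_iterate[of "G ^^ K" "int b" w M2 k, OF shift_pow ret_w]
    by (simp add: funpow_mult)
  have "int K * m = int k * M2"
    using translation_number_unique[OF mono shift _ u_Kk w_Kk] b by simp
  with w_Kk have "(G ^^ (K * k)) w = w + (int K * m) * int b" by simp
  then have "(G ^^ k) w = w + m * int b"
    by (rule translation_root[of G "int b" K k w m, OF mono shift K])
  with k bounds ret_k show ?thesis by blast
qed

section \<open>Floor sums and mod-reset dynamics\<close>

text \<open>Total number of firings of a side with n vertices of degree d (plus an initial count x0),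
  when the i-th vertex has residue c i and the side has received z chips in total.\<close>

definition floor_sum :: "nat \<Rightarrow> nat \<Rightarrow> (nat \<Rightarrow> int) \<Rightarrow> int \<Rightarrow> int \<Rightarrow> int" where
  "floor_sum n d c x0 z = x0 + (\<Sum>i<n. (c i + z) div int d)"

lemma floor_sum_mono: "d > 0 \<Longrightarrow> mono (floor_sum n d c x0)"
  unfolding mono_def floor_sum_def by (auto intro!: sum_mono zdiv_mono1)

lemma floor_sum_shift: "d > 0 \<Longrightarrow> floor_sum n d c x0 (z + int d) = floor_sum n d c x0 z + int n"
proof -
  assume d: "d > 0"
  have "(c i + (z + int d)) div int d = (c i + z) div int d + 1" for i
    using d by (simp add: add.assoc[symmetric] div_add_self2)
  then show ?thesis unfolding floor_sum_def by (simp add: sum.distrib)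
qed

lemma wrap_count:
  fixes z y d :: int
  assumes d: "d > 0" and y: "0 \<le> y" "y \<le> d"
  shows "of_bool (d \<le> z mod d + y) = (z + y) div d - z div d"
proof -
  have r: "0 \<le> z mod d" "z mod d < d" using d by simp_all
  have split: "z + y = (z mod d + y) + z div d * d" by (simp add: algebra_simps)
  have "(z + y) div d = ((z mod d + y) + z div d * d) div d" by (simp only: split[symmetric])
  also have "\<dots> = z div d + (z mod d + y) div d" by (rule div_mult_self1) (use d in simp)
  finally have "(z + y) div d = z div d + (z mod d + y) div d" .
  moreover have "(z mod d + y) div d = of_bool (d \<le> z mod d + y)"
  proof (cases "d \<le> z mod d + y")
    case True
    have "(z mod d + y) div d = (z mod d + y - d) div d + 1" using d by (simp add: div_add_self2[symmetric])
    also have "(z mod d + y - d) div d = 0" using True d y r by simp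
    finally show ?thesis using True by simp
  next
    case False
    then show ?thesis using d y r by simp
  qed
  ultimately show ?thesis by simp
qed

lemma reset_dynamics:
  fixes \<alpha> :: "nat \<Rightarrow> nat \<Rightarrow> nat" and inflow outflow :: "nat \<Rightarrow> nat" and n d :: nat
  assumes d: "d > 0" and inflow_le: "\<And>t. inflow t \<le> d"
    and step: "\<And>i t. i < n \<Longrightarrow> \<alpha> i (Suc t) = \<alpha> i t mod d + inflow t"
    and outflow: "\<And>t. outflow t = card {i. i < n \<and> d \<le> \<alpha> i t}"
  defines "D \<equiv> \<lambda>t. \<Sum>s<t. int (inflow s)"
    and "c \<equiv> \<lambda>i. int (\<alpha> i 0 mod d)"
  shows reset_residue: "\<And>i t. i < n \<Longrightarrow> int (\<alpha> i t mod d) = (c i + D t) mod int d"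
    and reset_value: "\<And>i t. i < n \<Longrightarrow> int (\<alpha> i (Suc t)) = (c i + D t) mod int d + (D (Suc t) - D t)"
    and reset_outflow: "\<And>t. (\<Sum>s<Suc t. int (outflow s)) = floor_sum n d c (int (outflow 0)) (D t)"
proof -
  show residue: "int (\<alpha> i t mod d) = (c i + D t) mod int d" if i: "i < n" for i t
  proof (induction t)
    case 0
    then show ?case by (simp add: c_def D_def zmod_int)
  next
    case (Suc t)
    have "int (\<alpha> i (Suc t) mod d) = (int (\<alpha> i t mod d) + int (inflow t)) mod int d"
      using step[OF i] by (simp add: zmod_int)
    also have "\<dots> = (c i + D (Suc t)) mod int d"
      using Suc by (simp add: D_def mod_add_left_eq add.assoc)
    finally show ?case .
  qed
  show val: "int (\<alpha> i (Suc t)) = (c i + D t) mod int d + (D (Suc t) - D t)" if "i < n" for i t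
    using step[OF that, of t] residue[OF that, of t] by (simp add: D_def)
  have fires: "of_bool (d \<le> \<alpha> i (Suc t)) = (c i + D (Suc t)) div int d - (c i + D t) div int d"
    if i: "i < n" for i t
  proof -
    have "of_bool (d \<le> \<alpha> i (Suc t)) = (of_bool (int d \<le> (c i + D t) mod int d + int (inflow t)) :: int)"
      using val[OF i, of t] by (simp add: D_def)
    also have "\<dots> = (c i + D t + int (inflow t)) div int d - (c i + D t) div int d"
      by (rule wrap_count) (use d inflow_le in auto)
    finally show ?thesis by (simp add: D_def add.assoc)
  qed
  have outflow_sum: "int (outflow t) = (\<Sum>i<n. of_bool (d \<le> \<alpha> i t))" for t
  proof -
    have "{..<n} \<inter> {i. d \<le> \<alpha> i t} = {i. i < n \<and> d \<le> \<alpha> i t}" by auto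
    then show ?thesis by (simp add: outflow)
  qed
  show "(\<Sum>s<Suc t. int (outflow s)) = floor_sum n d c (int (outflow 0)) (D t)" for t
  proof (induction t)
    case 0
    have "c i div int d = 0" for i using d by (simp add: c_def)
    then show ?case by (simp add: floor_sum_def D_def)
  next
    case (Suc t)
    have "int (outflow (Suc t)) = (\<Sum>i<n. (c i + D (Suc t)) div int d - (c i + D t) div int d)"
      unfolding outflow_sum by (rule sum.cong) (simp_all add: fires)
    then show ?case using Suc by (simp add: floor_sum_def sum_subtractf)
  qed
qed

lemma interleaved_return:
  fixes FA FB :: "int \<Rightarrow> int" and D :: "nat \<Rightarrow> int" and a b P :: nat
  assumes mono_A: "mono FA" and mono_B: "mono FB"
    and shift_A: "\<And>z. FA (z + int b) = FA z + int a"
    and shift_B: "\<And>z. FB (z + int a) = FB z + int b"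
    and a: "a > 0" and b: "b > 0" and P: "P > 0"
    and two_steps: "\<And>t. D (Suc (Suc t)) = FB (FA (D t))"
    and per: "\<And>t. D (t + 2 * P) mod int b = D t mod int b"
  shows "\<exists>k m. 0 < k \<and> k \<le> a \<and> k \<le> b \<and> (\<forall>t. D (t + 2 * k) = D t + m * int b)"
proof -
  define G where "G z = FB (FA z)" for z
  have shift: "G (z + int b) = G z + int b" for z by (simp add: G_def shift_A shift_B)
  have orbit: "D (t + 2 * n) = (G ^^ n) (D t)" for t n
    by (induction n) (simp_all add: G_def two_steps)
  have "\<exists>M. (G ^^ P) (D t) = D t + M * int b" for t
    using per[of t] cong_iff_translate[of "D t" "int b"] by (simp add: orbit eq_commute)
  then obtain M0 M1 where "(G ^^ P) (D 0) = D 0 + M0 * int b" "(G ^^ P) (D 1) = D 1 + M1 * int b"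
    by metis
  then obtain k m where k: "0 < k" "k \<le> a" "k \<le> b"
    and ret: "(G ^^ k) (D 0) = D 0 + m * int b" "(G ^^ k) (D 1) = D 1 + m * int b"
    using common_return[of G FB FA, OF _ mono_A mono_B shift_A shift_B a b P] by (metis G_def)
  have "D (t + 2 * k) = D t + m * int b" for t
  proof -
    define r where "r = t mod 2"
    have t: "t = r + 2 * (t div 2)" by (simp add: r_def)
    have "r = 0 \<or> r = 1" by (auto simp: r_def)
    then have ret_r: "(G ^^ k) (D r) = D r + m * int b" using ret by auto
    have "t + 2 * k = r + 2 * (t div 2 + k)" unfolding r_def by presburger
    then have "D (t + 2 * k) = (G ^^ (t div 2 + k)) (D r)" by (simp only: orbit)
    also have "\<dots> = (G ^^ (t div 2)) (D r + m * int b)" by (simp add: funpow_add ret_r)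
    also have "\<dots> = D t + m * int b"
      using orbit[of r "t div 2", folded t] funpow_shift[of G "int b", OF shift] by simp
    finally show ?thesis .
  qed
  with k show ?thesis by blast
qed

lemma card_restrict_le: "card {i. i < n \<and> P i} \<le> n"
  using card_mono[of "{..<n}" "{i. i < n \<and> P i}"] by auto

lemma reset_system_period:
  fixes \<alpha> \<beta> :: "nat \<Rightarrow> nat \<Rightarrow> nat" and X Y :: "nat \<Rightarrow> nat" and a b P :: nat
  assumes a: "a > 0" and b: "b > 0" and P: "P > 0"
    and X: "\<And>t. X t = card {i. i < a \<and> b \<le> \<alpha> i t}"
    and Y: "\<And>t. Y t = card {j. j < b \<and> a \<le> \<beta> j t}"
    and step_A: "\<And>i t. i < a \<Longrightarrow> \<alpha> i (Suc t) = \<alpha> i t mod b + Y t"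
    and step_B: "\<And>j t. j < b \<Longrightarrow> \<beta> j (Suc t) = \<beta> j t mod a + X t"
    and per: "\<And>t. \<alpha> 0 (t + P) = \<alpha> 0 t"
  shows "\<exists>k. 0 < k \<and> k \<le> a \<and> k \<le> b \<and>
           (\<forall>t\<ge>2. (\<forall>i<a. \<alpha> i (t + 2 * k) = \<alpha> i t) \<and> (\<forall>j<b. \<beta> j (t + 2 * k) = \<beta> j t))"
proof -
  have X_le: "X t \<le> a" and Y_le: "Y t \<le> b" for t by (simp_all add: X Y card_restrict_le)
  define DA where "DA t = (\<Sum>s<t. int (Y s))" for t
  define DB where "DB t = (\<Sum>s<t. int (X s))" for t
  define cA where "cA i = int (\<alpha> i 0 mod b)" for i
  define cB where "cB j = int (\<beta> j 0 mod a)" for j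
  define FA where "FA = floor_sum a b cA (int (X 0))"
  define FB where "FB = floor_sum b a cB (int (Y 0))"
  have res_A: "int (\<alpha> i t mod b) = (cA i + DA t) mod int b" if "i < a" for i t
    unfolding cA_def DA_def using b Y_le step_A X that by (rule reset_residue)
  have val_A: "int (\<alpha> i (Suc t)) = (cA i + DA t) mod int b + (DA (Suc t) - DA t)" if "i < a" for i t
    unfolding cA_def DA_def using b Y_le step_A X that by (rule reset_value)
  have val_B: "int (\<beta> j (Suc t)) = (cB j + DB t) mod int a + (DB (Suc t) - DB t)" if "j < b" for j t
    unfolding cB_def DB_def using a X_le step_B Y that by (rule reset_value)
  have DB_Suc: "DB (Suc t) = FA (DA t)" for t
    unfolding DB_def FA_def cA_def DA_def using b Y_le step_A X by (rule reset_outflow)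
  have DA_Suc: "DA (Suc t) = FB (DB t)" for t
    unfolding DA_def FB_def cB_def DB_def using a X_le step_B Y by (rule reset_outflow)
  have mono_A: "mono FA" and mono_B: "mono FB"
    unfolding FA_def FB_def using a b by (simp_all add: floor_sum_mono)
  have shift_A: "FA (z + int b) = FA z + int a" and shift_B: "FB (z + int a) = FB z + int b" for z
    unfolding FA_def FB_def using a b by (simp_all add: floor_sum_shift)
  have two_steps: "DA (Suc (Suc t)) = FB (FA (DA t))" for t by (simp add: DA_Suc DB_Suc)
  have DA_per_P: "DA (t + 2 * P) mod int b = DA t mod int b" for t
  proof -
    have "\<alpha> 0 (t + 2 * P) = \<alpha> 0 t" using per[of "t + P"] per[of t] by (simp add: mult_2 add.assoc)
    then have "(cA 0 + DA (t + 2 * P)) mod int b = (cA 0 + DA t) mod int b"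
      using res_A[OF a, of "t + 2 * P"] res_A[OF a, of t] by simp
    then show ?thesis by (simp add: mod_eq_dvd_iff)
  qed
  obtain k m where k: "0 < k" "k \<le> a" "k \<le> b" and DA_per: "\<And>t. DA (t + 2 * k) = DA t + m * int b"
    using interleaved_return[where D=DA, OF mono_A mono_B shift_A shift_B a b P two_steps DA_per_P] by blast
  have DB_per: "DB (Suc t + 2 * k) = DB (Suc t) + m * int a" for t
    using DB_Suc DA_per shift_mult[of FA "int b" "int a", OF shift_A] by simp
  have A_per: "\<alpha> i (Suc t + 2 * k) = \<alpha> i (Suc t)" if "i < a" for i t
  proof -
    have "int (\<alpha> i (Suc t + 2 * k)) = (cA i + DA t + m * int b) mod int b + (DA (Suc t) - DA t)"
      using val_A[OF that, of "t + 2 * k"] DA_per[of t] DA_per[of "Suc t"] by (simp add: add.assoc)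
    also have "\<dots> = int (\<alpha> i (Suc t))" using val_A[OF that, of t] by simp
    finally show ?thesis by simp
  qed
  have B_per: "\<beta> j (Suc (Suc t) + 2 * k) = \<beta> j (Suc (Suc t))" if "j < b" for j t
  proof -
    have "int (\<beta> j (Suc (Suc t) + 2 * k)) = (cB j + DB (Suc t) + m * int a) mod int a + (DB (Suc (Suc t)) - DB (Suc t))"
      using val_B[OF that, of "Suc t + 2 * k"] DB_per[of t] DB_per[of "Suc t"] by (simp add: add.assoc)
    also have "\<dots> = int (\<beta> j (Suc (Suc t)))" using val_B[OF that, of "Suc t"] by simp
    finally show ?thesis by simp
  qed
  have "(\<forall>i<a. \<alpha> i (t + 2 * k) = \<alpha> i t) \<and> (\<forall>j<b. \<beta> j (t + 2 * k) = \<beta> j t)" if "2 \<le> t" for t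
  proof -
    obtain t' where "t = Suc (Suc t')" using \<open>2 \<le> t\<close> by (metis add_2_eq_Suc le_Suc_ex)
    then show ?thesis using A_per[of _ "Suc t'"] B_per[of _ t'] by simp
  qed
  with k show ?thesis by blast
qed

section \<open>The game on K(a,b) and eventual periods\<close>

abbreviation Kab_step :: "nat \<Rightarrow> nat \<Rightarrow> (nat + nat \<Rightarrow> nat) \<Rightarrow> nat + nat \<Rightarrow> nat" where
  "Kab_step a b \<equiv> cf_step (Kab_V a b) Kab_E"

definition left_firing :: "nat \<Rightarrow> nat \<Rightarrow> (nat + nat \<Rightarrow> nat) \<Rightarrow> nat" where
  "left_firing a b \<sigma> = card {i. i < a \<and> b \<le> \<sigma> (Inl i)}"

definition right_firing :: "nat \<Rightarrow> nat \<Rightarrow> (nat + nat \<Rightarrow> nat) \<Rightarrow> nat" where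
  "right_firing a b \<sigma> = card {j. j < b \<and> a \<le> \<sigma> (Inr j)}"

lemma deg_Inl: "deg (Kab_V a b) Kab_E (Inl i) = b"
proof -
  have "{u \<in> Kab_V a b. Kab_E (Inl i) u} = Inr ` {..<b}" by (auto simp: Kab_V_def Kab_E_def)
  then show ?thesis by (simp add: deg_def card_image)
qed

lemma deg_Inr: "deg (Kab_V a b) Kab_E (Inr j) = a"
proof -
  have "{u \<in> Kab_V a b. Kab_E (Inr j) u} = Inl ` {..<a}" by (auto simp: Kab_V_def Kab_E_def)
  then show ?thesis by (simp add: deg_def card_image)
qed

lemma Kab_step_Inl:
  assumes "i < a"
  shows "Kab_step a b \<sigma> (Inl i) = \<sigma> (Inl i) - (if b \<le> \<sigma> (Inl i) then b else 0) + right_firing a b \<sigma>"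
proof -
  have "{u \<in> Kab_V a b. Kab_E u (Inl i) \<and> deg (Kab_V a b) Kab_E u \<le> \<sigma> u} = Inr ` {j. j < b \<and> a \<le> \<sigma> (Inr j)}"
    using deg_Inr[of a b] by (auto simp: Kab_V_def Kab_E_def)
  moreover have "Inl i \<in> Kab_V a b" using assms by (simp add: Kab_V_def)
  ultimately show ?thesis by (simp add: cf_step_def deg_Inl card_image right_firing_def)
qed

lemma Kab_step_Inr:
  assumes "j < b"
  shows "Kab_step a b \<sigma> (Inr j) = \<sigma> (Inr j) - (if a \<le> \<sigma> (Inr j) then a else 0) + left_firing a b \<sigma>"
proof -
  have "{u \<in> Kab_V a b. Kab_E u (Inr j) \<and> deg (Kab_V a b) Kab_E u \<le> \<sigma> u} = Inl ` {i. i < a \<and> b \<le> \<sigma> (Inl i)}"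
    using deg_Inl[of a b] by (auto simp: Kab_V_def Kab_E_def)
  moreover have "Inr j \<in> Kab_V a b" using assms by (simp add: Kab_V_def)
  ultimately show ?thesis by (simp add: cf_step_def deg_Inr card_image left_firing_def)
qed

lemma Kab_step_outside: "v \<notin> Kab_V a b \<Longrightarrow> (Kab_step a b ^^ n) \<sigma> v = \<sigma> v"
  by (induction n) (simp_all add: cf_step_def)

lemma Kab_cases:
  fixes v :: "nat + nat"
  obtains (left) i where "v = Inl i" "i < a" | (right) j where "v = Inr j" "j < b" | (outside) "v \<notin> Kab_V a b"
  by (cases v) (auto simp: Kab_V_def)

lemma Kab_state_eqI:
  assumes "\<And>i. i < a \<Longrightarrow> \<sigma> (Inl i) = \<tau> (Inl i)" and "\<And>j. j < b \<Longrightarrow> \<sigma> (Inr j) = \<tau> (Inr j)"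
    and "\<And>v. v \<notin> Kab_V a b \<Longrightarrow> \<sigma> v = \<tau> v"
  shows "\<sigma> = \<tau>"
proof
  fix v show "\<sigma> v = \<tau> v" by (cases v rule: Kab_cases[where a=a and b=b]) (use assms in auto)
qed

text \<open>The least eventual period divides every q with one return after q steps: otherwise q mod p
  would be a smaller eventual period.\<close>

lemma period_dvd:
  assumes per: "is_period V E \<sigma> p"
    and ret: "(cf_step V E ^^ (t + q)) \<sigma> = (cf_step V E ^^ t) \<sigma>"
  shows "p dvd q"
proof (rule ccontr)
  let ?T = "cf_step V E"
  from per obtain t0 where p: "0 < p" and eventually: "\<And>n. t0 \<le> n \<Longrightarrow> (?T ^^ (n + p)) \<sigma> = (?T ^^ n) \<sigma>"
    and minimal: "\<And>r. 0 < r \<Longrightarrow> r < p \<Longrightarrow> \<not> eventual_period V E \<sigma> r"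
    unfolding is_period_def eventual_period_def by blast
  have ret_after: "(?T ^^ (n + q)) \<sigma> = (?T ^^ n) \<sigma>" if "t \<le> n" for n
  proof -
    obtain j where n: "n = j + t" using \<open>t \<le> n\<close> le_Suc_ex by (metis add.commute)
    have "n + q = j + (t + q)" using n by simp
    then have "(?T ^^ (n + q)) \<sigma> = (?T ^^ j) ((?T ^^ (t + q)) \<sigma>)"
      by (simp only: funpow_add[where m=j and n="t + q"] comp_apply)
    also have "\<dots> = (?T ^^ n) \<sigma>" by (subst ret) (simp add: n funpow_add)
    finally show ?thesis .
  qed
  have per_mult: "(?T ^^ (n + p * c)) \<sigma> = (?T ^^ n) \<sigma>" if "t0 \<le> n" for n c
  proof (induction c)
    case (Suc c)
    have "(?T ^^ (n + p * Suc c)) \<sigma> = (?T ^^ ((n + p * c) + p)) \<sigma>" by (simp add: algebra_simps)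
    with Suc that show ?case by (simp add: eventually)
  qed simp
  assume "\<not> p dvd q"
  then have r: "0 < q mod p" "q mod p < p" using p by (simp_all add: mod_greater_zero_iff_not_dvd)
  have "eventual_period V E \<sigma> (q mod p)"
    unfolding eventual_period_def
  proof (intro conjI exI allI impI)
    fix n assume n: "max t0 t \<le> n"
    have "(?T ^^ (n + q mod p)) \<sigma> = (?T ^^ (n + q mod p + p * (q div p))) \<sigma>"
      using per_mult[of "n + q mod p" "q div p"] n by simp
    also have "\<dots> = (?T ^^ (n + q)) \<sigma>" by (simp add: add.assoc)
    also have "\<dots> = (?T ^^ n) \<sigma>" using ret_after n by simp
    finally show "(?T ^^ (n + q mod p)) \<sigma> = (?T ^^ n) \<sigma>" .
  qed (use r in simp)
  with minimal r show False by blast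
qed

lemma is_period_of_cycle:
  assumes P: "0 < P" and cycle: "(cf_step V E ^^ P) \<sigma> = \<sigma>"
    and exact: "\<And>q. 0 < q \<Longrightarrow> q < P \<Longrightarrow> (cf_step V E ^^ q) \<sigma> \<noteq> \<sigma>"
  shows "is_period V E \<sigma> P"
  unfolding is_period_def
proof (intro conjI allI impI notI)
  let ?T = "cf_step V E"
  have multiple: "(?T ^^ (P * c)) \<sigma> = \<sigma>" for c
    by (induction c) (simp_all add: funpow_add cycle)
  show "eventual_period V E \<sigma> P"
    unfolding eventual_period_def using P cycle by (simp add: funpow_add)
  fix q assume q: "0 < q \<and> q < P" and "eventual_period V E \<sigma> q"
  then obtain t1 where t1: "\<And>t. t1 \<le> t \<Longrightarrow> (?T ^^ (t + q)) \<sigma> = (?T ^^ t) \<sigma>"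
    unfolding eventual_period_def by blast
  have "t1 \<le> P * t1" using P by simp
  from t1[OF this] have "(?T ^^ q) ((?T ^^ (P * t1)) \<sigma>) = (?T ^^ (P * t1)) \<sigma>"
    by (simp add: funpow_add add.commute)
  with multiple exact q show False by simp
qed

section \<open>Necessity\<close>

text \<open>A vertex that fires at every step of a period must receive d chips at every step: over the
  period its gains and losses cancel, and each step loses d and gains at most d.\<close>

lemma firing_throughout_period:
  fixes f inflow :: "nat \<Rightarrow> nat"
  assumes step: "\<And>n. f (Suc n) = f n - (if d \<le> f n then d else 0) + inflow n"
    and inflow_le: "\<And>n. inflow n \<le> d" and fires: "\<And>n. n < p \<Longrightarrow> d \<le> f n"
    and per: "f p = f 0" and n: "n < p"
  shows "inflow n = d"
proof -
  have "(\<Sum>m<p. int (f (Suc m)) - int (f m)) = int (f p) - int (f 0)"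
    by (rule sum_lessThan_telescope)
  moreover have "(\<Sum>m<p. int (f (Suc m)) - int (f m)) = (\<Sum>m<p. int (inflow m) - int d)"
  proof (rule sum.cong)
    fix m assume "m \<in> {..<p}"
    then show "int (f (Suc m)) - int (f m) = int (inflow m) - int d"
      using step[of m] fires[of m] by simp
  qed simp
  ultimately have "(\<Sum>m<p. int d - int (inflow m)) = 0" using per by (simp add: sum_subtractf)
  moreover have "\<forall>m\<in>{..<p}. 0 \<le> int d - int (inflow m)" using inflow_le by simp
  ultimately have "\<forall>m\<in>{..<p}. int d - int (inflow m) = 0"
    using sum_nonneg_eq_0_iff[of "{..<p}" "\<lambda>m. int d - int (inflow m)"] by simp
  with n show ?thesis by simp
qed

lemma card_restrict_full:
  assumes "card {j. j < b \<and> P j} = b" and "j < b"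
  shows "P j"
proof -
  have "{j. j < b \<and> P j} = {..<b}" by (rule card_subset_eq) (use assms in auto)
  with assms(2) show ?thesis by auto
qed

lemma below_twice_degree:
  fixes f inflow :: "nat \<Rightarrow> nat"
  assumes step: "\<And>n. f (Suc n) = f n - (if d \<le> f n then d else 0) + inflow n"
    and inflow_le: "\<And>n. inflow n \<le> d" and low: "f t < d" and "t \<le> m"
  shows "f m < 2 * d"
  using \<open>t \<le> m\<close>
proof (induction m rule: dec_induct)
  case base
  with low show ?case by simp
next
  case (step n)
  then show ?case using assms(1)[of n] inflow_le[of n] by auto
qed

lemma fire_as_mod: "(x::nat) < 2 * d \<Longrightarrow> x - (if d \<le> x then d else 0) = x mod d"
  by (auto simp: le_mod_geq)

text \<open>Case 1 of necessity: if some vertex of a cycle fires at every step, then every vertex does,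
  so each vertex loses and regains its degree and the state is a fixed point.\<close>

lemma persistent_firing_fixed_point:
  fixes \<sigma> :: "nat + nat \<Rightarrow> nat"
  assumes a: "0 < a" and b: "0 < b" and p: "0 < p"
    and cycle: "(Kab_step a b ^^ p) \<sigma> = \<sigma>"
    and persistent: "(\<exists>i<a. \<forall>n<p. b \<le> (Kab_step a b ^^ n) \<sigma> (Inl i)) \<or>
                     (\<exists>j<b. \<forall>n<p. a \<le> (Kab_step a b ^^ n) \<sigma> (Inr j))"
  shows "Kab_step a b \<sigma> = \<sigma>"
proof -
  define s where "s n = (Kab_step a b ^^ n) \<sigma>" for n
  have s_p: "s p = s 0" using cycle by (simp add: s_def)
  have step_L: "s (Suc n) (Inl i) = s n (Inl i) - (if b \<le> s n (Inl i) then b else 0) + right_firing a b (s n)"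
    if "i < a" for i n using Kab_step_Inl[OF that] by (simp add: s_def)
  have step_R: "s (Suc n) (Inr j) = s n (Inr j) - (if a \<le> s n (Inr j) then a else 0) + left_firing a b (s n)"
    if "j < b" for j n using Kab_step_Inr[OF that] by (simp add: s_def)
  have left_spreads: "\<forall>n<p. \<forall>j<b. a \<le> s n (Inr j)" if "i < a" "\<forall>n<p. b \<le> s n (Inl i)" for i
  proof (intro allI impI)
    fix n j assume "n < p" "j < b"
    have "right_firing a b (s n) = b"
      using firing_throughout_period[of "\<lambda>n. s n (Inl i)" b "\<lambda>n. right_firing a b (s n)" p n,
          OF step_L[OF \<open>i < a\<close>]] that s_p \<open>n < p\<close>
      by (simp add: right_firing_def card_restrict_le)
    then show "a \<le> s n (Inr j)" using card_restrict_full \<open>j < b\<close> by (metis right_firing_def)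
  qed
  have right_spreads: "\<forall>n<p. \<forall>i<a. b \<le> s n (Inl i)" if "j < b" "\<forall>n<p. a \<le> s n (Inr j)" for j
  proof (intro allI impI)
    fix n i assume "n < p" "i < a"
    have "left_firing a b (s n) = a"
      using firing_throughout_period[of "\<lambda>n. s n (Inr j)" a "\<lambda>n. left_firing a b (s n)" p n,
          OF step_R[OF \<open>j < b\<close>]] that s_p \<open>n < p\<close>
      by (simp add: left_firing_def card_restrict_le)
    then show "b \<le> s n (Inl i)" using card_restrict_full \<open>i < a\<close> by (metis left_firing_def)
  qed
  have all_R: "\<forall>n<p. \<forall>j<b. a \<le> s n (Inr j)"
    using persistent left_spreads right_spreads a unfolding s_def by blast
  have all_L: "\<forall>n<p. \<forall>i<a. b \<le> s n (Inl i)" using right_spreads[OF b] all_R by blast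
  have L0: "b \<le> \<sigma> (Inl i)" if "i < a" for i using all_L p that by (metis s_def funpow_0)
  have R0: "a \<le> \<sigma> (Inr j)" if "j < b" for j using all_R p that by (metis s_def funpow_0)
  have "{i. i < a \<and> b \<le> \<sigma> (Inl i)} = {..<a}" "{j. j < b \<and> a \<le> \<sigma> (Inr j)} = {..<b}"
    using L0 R0 by auto
  then have "left_firing a b \<sigma> = a" "right_firing a b \<sigma> = b" by (simp_all add: left_firing_def right_firing_def)
  then show ?thesis
    using L0 R0 Kab_step_Inl[of _ a b \<sigma>] Kab_step_Inr[of _ b a \<sigma>] Kab_step_outside[of _ a b 1 \<sigma>]
    by (intro Kab_state_eqI[where a=a and b=b]) auto
qed

text \<open>Case 2 of necessity: if every vertex rests at some step of a cycle, the game reaches the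
  mod-reset regime and returns after 2k steps with k <= min(a,b).\<close>

lemma bounded_regime_return:
  fixes \<sigma> :: "nat + nat \<Rightarrow> nat"
  assumes a: "0 < a" and b: "0 < b" and p: "0 < p"
    and cycle: "(Kab_step a b ^^ p) \<sigma> = \<sigma>"
    and rests_L: "\<And>i. i < a \<Longrightarrow> \<exists>n<p. (Kab_step a b ^^ n) \<sigma> (Inl i) < b"
    and rests_R: "\<And>j. j < b \<Longrightarrow> \<exists>n<p. (Kab_step a b ^^ n) \<sigma> (Inr j) < a"
  shows "\<exists>k t. 0 < k \<and> k \<le> min a b \<and> (Kab_step a b ^^ (t + 2 * k)) \<sigma> = (Kab_step a b ^^ t) \<sigma>"
proof -
  define s where "s n = (Kab_step a b ^^ n) \<sigma>" for n
  have s_per: "s (n + p) = s n" for n using cycle by (simp add: s_def funpow_add)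
  have step_L: "s (Suc n) (Inl i) = s n (Inl i) - (if b \<le> s n (Inl i) then b else 0) + right_firing a b (s n)"
    if "i < a" for i n using Kab_step_Inl[OF that] by (simp add: s_def)
  have step_R: "s (Suc n) (Inr j) = s n (Inr j) - (if a \<le> s n (Inr j) then a else 0) + left_firing a b (s n)"
    if "j < b" for j n using Kab_step_Inr[OF that] by (simp add: s_def)
  have low_L: "s m (Inl i) < 2 * b" if "i < a" "p \<le> m" for i m
  proof -
    obtain n where "n < p" "s n (Inl i) < b" using rests_L[OF \<open>i < a\<close>] by (auto simp: s_def)
    then show ?thesis
      using below_twice_degree[of "\<lambda>n. s n (Inl i)" b "\<lambda>n. right_firing a b (s n)" n m, OF step_L[OF \<open>i < a\<close>]]
        \<open>p \<le> m\<close> by (simp add: right_firing_def card_restrict_le)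
  qed
  have low_R: "s m (Inr j) < 2 * a" if "j < b" "p \<le> m" for j m
  proof -
    obtain n where "n < p" "s n (Inr j) < a" using rests_R[OF \<open>j < b\<close>] by (auto simp: s_def)
    then show ?thesis
      using below_twice_degree[of "\<lambda>n. s n (Inr j)" a "\<lambda>n. left_firing a b (s n)" n m, OF step_R[OF \<open>j < b\<close>]]
        \<open>p \<le> m\<close> by (simp add: left_firing_def card_restrict_le)
  qed
  define \<alpha> where "\<alpha> i n = s (p + n) (Inl i)" for i n
  define \<beta> where "\<beta> j n = s (p + n) (Inr j)" for j n
  have "\<exists>k. 0 < k \<and> k \<le> a \<and> k \<le> b \<and>
          (\<forall>t\<ge>2. (\<forall>i<a. \<alpha> i (t + 2 * k) = \<alpha> i t) \<and> (\<forall>j<b. \<beta> j (t + 2 * k) = \<beta> j t))"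
  proof (rule reset_system_period[OF a b p])
    show "left_firing a b (s (p + t)) = card {i. i < a \<and> b \<le> \<alpha> i t}" for t
      by (simp add: left_firing_def \<alpha>_def)
    show "right_firing a b (s (p + t)) = card {j. j < b \<and> a \<le> \<beta> j t}" for t
      by (simp add: right_firing_def \<beta>_def)
    show "\<alpha> i (Suc t) = \<alpha> i t mod b + right_firing a b (s (p + t))" if "i < a" for i t
      using step_L[OF that, of "p + t"] fire_as_mod[OF low_L[OF that, of "p + t"]] by (simp add: \<alpha>_def)
    show "\<beta> j (Suc t) = \<beta> j t mod a + left_firing a b (s (p + t))" if "j < b" for j t
      using step_R[OF that, of "p + t"] fire_as_mod[OF low_R[OF that, of "p + t"]] by (simp add: \<beta>_def)
    show "\<alpha> 0 (t + p) = \<alpha> 0 t" for t using s_per[of "p + t"] by (simp add: \<alpha>_def add.assoc)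
  qed
  then obtain k where k: "0 < k" "k \<le> a" "k \<le> b"
    and k_per: "\<forall>t\<ge>2. (\<forall>i<a. \<alpha> i (t + 2 * k) = \<alpha> i t) \<and> (\<forall>j<b. \<beta> j (t + 2 * k) = \<beta> j t)"
    by blast
  have "s (p + 2 + 2 * k) = s (p + 2)"
  proof (rule Kab_state_eqI[where a=a and b=b])
    show "s (p + 2 + 2 * k) (Inl i) = s (p + 2) (Inl i)" if "i < a" for i
      using k_per[rule_format, of 2] that unfolding \<alpha>_def by (simp only: add.assoc order_refl simp_thms)
    show "s (p + 2 + 2 * k) (Inr j) = s (p + 2) (Inr j)" if "j < b" for j
      using k_per[rule_format, of 2] that unfolding \<beta>_def by (simp only: add.assoc order_refl simp_thms)
    show "s (p + 2 + 2 * k) v = s (p + 2) v" if "v \<notin> Kab_V a b" for v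
      unfolding s_def by (simp only: Kab_step_outside[OF that])
  qed
  with k show ?thesis unfolding s_def by (intro exI[of _ k] exI[of _ "p + 2"]) simp
qed

lemma period_divides_bounded_double:
  assumes a: "0 < a" and b: "0 < b" and per: "is_period (Kab_V a b) Kab_E \<sigma> p"
  shows "\<exists>k. 0 < k \<and> k \<le> min a b \<and> p dvd 2 * k"
proof -
  obtain t0 where p: "0 < p" and ret: "(Kab_step a b ^^ (t0 + p)) \<sigma> = (Kab_step a b ^^ t0) \<sigma>"
    using per unfolding is_period_def eventual_period_def by blast
  define \<sigma>0 where "\<sigma>0 = (Kab_step a b ^^ t0) \<sigma>"
  have from_\<sigma>0: "(Kab_step a b ^^ (t0 + n)) \<sigma> = (Kab_step a b ^^ n) \<sigma>0" for n
    by (simp add: \<sigma>0_def funpow_add add.commute)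
  have cycle: "(Kab_step a b ^^ p) \<sigma>0 = \<sigma>0"
    using ret from_\<sigma>0[of p] by (simp add: \<sigma>0_def)
  show ?thesis
  proof (cases "(\<exists>i<a. \<forall>n<p. b \<le> (Kab_step a b ^^ n) \<sigma>0 (Inl i)) \<or>
                (\<exists>j<b. \<forall>n<p. a \<le> (Kab_step a b ^^ n) \<sigma>0 (Inr j))")
    case True
    then have "Kab_step a b \<sigma>0 = \<sigma>0" by (rule persistent_firing_fixed_point[OF a b p cycle])
    then have "(Kab_step a b ^^ (t0 + 1)) \<sigma> = (Kab_step a b ^^ t0) \<sigma>"
      using from_\<sigma>0[of 1] by (simp add: \<sigma>0_def)
    then have "p dvd 1" by (rule period_dvd[OF per])
    with a b show ?thesis by (intro exI[of _ 1]) simp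
  next
    case False
    then obtain k t where k: "0 < k" "k \<le> min a b"
      and "(Kab_step a b ^^ (t + 2 * k)) \<sigma>0 = (Kab_step a b ^^ t) \<sigma>0"
      using bounded_regime_return[OF a b p cycle] by (meson not_le)
    then have "(Kab_step a b ^^ (t0 + t + 2 * k)) \<sigma> = (Kab_step a b ^^ (t0 + t)) \<sigma>"
      using from_\<sigma>0 by (simp add: add.assoc)
    then have "p dvd 2 * k" by (rule period_dvd[OF per])
    with k show ?thesis by blast
  qed
qed

lemma divisor_of_bounded_double:
  fixes p k m :: nat
  assumes "p dvd 2 * k" and "0 < k" and "k \<le> m" and "0 < p"
  shows "p \<in> {i. 1 \<le> i \<and> i \<le> m} \<union> {2 * i | i. 1 \<le> i \<and> i \<le> m}"
proof (cases "even p")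
  case True
  then obtain i where p: "p = 2 * i" by blast
  with assms have "i dvd k" "1 \<le> i" by simp_all
  with assms p show ?thesis by (auto dest: dvd_imp_le)
next
  case False
  then have "p dvd k" using assms(1) by (simp add: coprime_dvd_mult_right_iff)
  with assms show ?thesis by (auto dest: dvd_imp_le)
qed

section \<open>Sufficiency: rotor configurations\<close>

text \<open>The n vertices of a side are split into d groups: group 0 holds
  vertices 0 and d..n-1, every other group h < d the single vertex h. A vertex with phase
  offset phi has phase (t - phi) mod P at time t and fires exactly at phase 0. With e in {1,2}
  the groups of the two sides fire alternately in cyclic order; between firings a vertex at
  phase x holds the chips of the first held_groups e d x groups of the other side, counted
  cyclically from its own group (window_sum).\<close>

definition grp :: "nat \<Rightarrow> nat \<Rightarrow> nat" where "grp d i = (if i < d then i else 0)"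
definition grp_size :: "nat \<Rightarrow> nat \<Rightarrow> nat \<Rightarrow> nat" where "grp_size n d h = (if h = 0 then n - d + 1 else 1)"
definition phase :: "nat \<Rightarrow> nat \<Rightarrow> nat \<Rightarrow> nat" where "phase P phi t = (t + P - phi) mod P"
definition held_groups :: "nat \<Rightarrow> nat \<Rightarrow> nat \<Rightarrow> nat" where "held_groups e d x = (if x = 0 then d else x div e)"
definition window_sum :: "(nat \<Rightarrow> nat) \<Rightarrow> nat \<Rightarrow> nat \<Rightarrow> nat \<Rightarrow> nat" where
  "window_sum s d g c = (\<Sum>k<c. s ((g + k) mod d))"

lemma window_sum_Suc: "window_sum s d g (Suc c) = window_sum s d g c + s ((g + c) mod d)"
  by (simp add: window_sum_def)

lemma window_sum_full:
  assumes d: "d > 0"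
  shows "window_sum s d g d = (\<Sum>k<d. s k)"
proof -
  let ?f = "\<lambda>k. (g + k) mod d"
  have inj: "inj_on ?f {..<d}"
  proof (rule inj_onI)
    fix x y assume x: "x \<in> {..<d}" and y: "y \<in> {..<d}" and e: "(g + x) mod d = (g + y) mod d"
    have "int (g + x) mod int d = int (g + y) mod int d" using e by (metis zmod_int)
    then have "int d dvd int (g + x) - int (g + y)" by (simp only: mod_eq_dvd_iff)
    then have "int d dvd int x - int y" by simp
    then have "int x mod int d = int y mod int d" by (simp only: mod_eq_dvd_iff[symmetric])
    then show "x = y" using x y by simp
  qed
  have im: "?f ` {..<d} = {..<d}"
    by (rule endo_inj_surj) (use inj d in auto)
  have "(\<Sum>k<d. s k) = (\<Sum>k\<in>?f ` {..<d}. s k)" using im by simp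
  also have "\<dots> = (\<Sum>k<d. s (?f k))" using sum.reindex[OF inj, of s] by simp
  finally show ?thesis by (simp add: window_sum_def)
qed

lemma grp_size_sum:
  assumes "1 \<le> d" "d \<le> n"
  shows "(\<Sum>k<d. grp_size n d k) = n"
proof -
  obtain m where d: "d = Suc m" using assms by (cases d) auto
  have "(\<Sum>k<d. grp_size n d k) = grp_size n d 0 + (\<Sum>k<m. grp_size n d (Suc k))"
    unfolding d by (rule sum.lessThan_Suc_shift)
  also have "\<dots> = n - d + 1 + m" by (simp add: grp_size_def)
  finally show ?thesis using assms d by simp
qed

lemma grp_size_pos: "d \<le> n \<Longrightarrow> 1 \<le> grp_size n d k"
  by (simp add: grp_size_def)

lemma window_sum_partial:
  assumes c: "c < d" and pos: "\<And>k. 1 \<le> s k"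
  shows "window_sum s d g c < window_sum s d g d"
proof -
  have "window_sum s d g d = (\<Sum>k\<in>{0..<c}. s ((g + k) mod d)) + (\<Sum>k\<in>{c..<d}. s ((g + k) mod d))"
    unfolding window_sum_def atLeast0LessThan[symmetric] using c by (simp add: sum.atLeastLessThan_concat)
  moreover have "(\<Sum>k\<in>{c..<d}. s ((g + k) mod d)) \<ge> (\<Sum>k\<in>{c..<d}. 1)"
    by (rule sum_mono) (use pos in auto)
  moreover have "(\<Sum>k\<in>{c..<d}. (1::nat)) \<ge> 1" using c by simp
  ultimately show ?thesis unfolding window_sum_def atLeast0LessThan[symmetric] by linarith
qed

lemma window_step:
  assumes e: "e = 1 \<or> e = 2" and d: "d > 0" and pos: "\<And>k. 1 \<le> s k"
    and dg: "dg = (\<Sum>k<d. s k)" and x: "x < e * d"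
  shows "window_sum s d g (held_groups e d x) - (if dg \<le> window_sum s d g (held_groups e d x) then dg else 0)
           + (if x mod e = e - 1 then s ((g + x div e) mod d) else 0)
         = window_sum s d g (held_groups e d ((x + 1) mod (e * d)))"
    and "dg \<le> window_sum s d g (held_groups e d x) \<longleftrightarrow> x = 0"
proof -
  have tot: "window_sum s d g d = dg" using window_sum_full[OF d] dg by simp
  have xd: "x div e < d" using x e by (auto simp: less_mult_imp_div_less)
  have fire: "dg \<le> window_sum s d g (held_groups e d x) \<longleftrightarrow> x = 0"
  proof (cases "x = 0")
    case True then show ?thesis using tot by (simp add: held_groups_def)
  next
    case False
    then have "window_sum s d g (held_groups e d x) < dg"
      using window_sum_partial[of "x div e" d s g, OF xd pos] tot by (simp add: held_groups_def)
    then show ?thesis using False by simp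
  qed
  then show "dg \<le> window_sum s d g (held_groups e d x) \<longleftrightarrow> x = 0" .
  have lhs1: "window_sum s d g (held_groups e d x) - (if dg \<le> window_sum s d g (held_groups e d x) then dg else 0)
      = window_sum s d g (x div e)"
    using fire tot by (cases "x = 0") (simp_all add: held_groups_def window_sum_def)
  have c1: "held_groups e d ((x + 1) mod (e * d)) = (x + 1) div e"
  proof (cases "x + 1 = e * d")
    case True then show ?thesis using d e by (auto simp: held_groups_def)
  next
    case False
    then have "x + 1 < e * d" using x by simp
    then show ?thesis using e by (auto simp: held_groups_def)
  qed
  have c2: "(x + 1) div e = x div e + (if x mod e = e - 1 then 1 else 0)"
    using e by (auto; presburger)
  show "window_sum s d g (held_groups e d x) - (if dg \<le> window_sum s d g (held_groups e d x) then dg else 0)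
           + (if x mod e = e - 1 then s ((g + x div e) mod d) else 0)
         = window_sum s d g (held_groups e d ((x + 1) mod (e * d)))"
    unfolding lhs1 c1 c2 by (simp add: window_sum_Suc)
qed

lemma phase_Suc: "phi \<le> P \<Longrightarrow> phase P phi (Suc t) = (phase P phi t + 1) mod P"
proof -
  assume "phi \<le> P"
  then have "Suc t + P - phi = Suc (t + P - phi)" by simp
  then show ?thesis by (simp add: phase_def mod_Suc_eq)
qed

lemma phase_add: "phi \<le> P \<Longrightarrow> (phi + phase P phi t) mod P = t mod P"
proof -
  assume ph: "phi \<le> P"
  have "(phi + phase P phi t) mod P = (phi + (t + P - phi)) mod P" by (simp add: phase_def mod_add_right_eq)
  also have "phi + (t + P - phi) = t + P" using ph by simp
  finally show ?thesis by simp
qed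

lemma phase_lt: "P > 0 \<Longrightarrow> phase P phi t < P" by (simp add: phase_def)

lemma phase_zero_iff:
  assumes ph: "phi < P"
  shows "phase P phi t = 0 \<longleftrightarrow> t mod P = phi"
proof -
  have P: "P > 0" using ph by simp
  have a: "(phi + phase P phi t) mod P = t mod P" using phase_add[of phi P t] ph by simp
  have l: "phase P phi t < P" using phase_lt[OF P] .
  show ?thesis
  proof
    assume "phase P phi t = 0"
    moreover have "phi mod P = phi" using ph by simp
    ultimately show "t mod P = phi" using a by simp
  next
    assume t: "t mod P = phi"
    show "phase P phi t = 0"
    proof (rule ccontr)
      assume nz: "phase P phi t \<noteq> 0"
      show False
      proof (cases "phi + phase P phi t < P")
        case True then show False using a t nz by simp
      next
        case False
        then have "(phi + phase P phi t) mod P = phi + phase P phi t - P"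
          using l ph by (simp add: le_mod_geq)
        then show False using a t l False by linarith
      qed
    qed
  qed
qed

lemma phase_periodic: "phi \<le> P \<Longrightarrow> phase P phi (t + P) = phase P phi t"
proof -
  assume "phi \<le> P"
  then have "t + P + P - phi = (t + P - phi) + P" by simp
  then show ?thesis by (simp add: phase_def)
qed

lemma mod_mult_decompose: "(e::nat) > 0 \<Longrightarrow> (e * g + x) mod (e * d) = e * ((g + x div e) mod d) + x mod e"
proof -
  assume e: "e > 0"
  have "(e * g + x) mod (e * d) = e * ((e * g + x) div e mod d) + (e * g + x) mod e"
    using mod_mult2_eq[of "e * g + x" e d] by simp
  moreover have "(e * g + x) div e = g + x div e" using e by simp
  moreover have "(e * g + x) mod e = x mod e" by simp
  ultimately show ?thesis by simp
qed

lemma mult_add_eq_iff: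
  assumes "c1 < e" "c2 < (e::nat)"
  shows "e * h1 + c1 = e * h2 + c2 \<longleftrightarrow> h1 = h2 \<and> c1 = c2"
proof
  assume eq: "e * h1 + c1 = e * h2 + c2"
  have "(e * h1 + c1) div e = h1" "(e * h2 + c2) div e = h2" using assms by simp_all
  moreover have "(e * h1 + c1) mod e = c1" "(e * h2 + c2) mod e = c2" using assms by simp_all
  ultimately show "h1 = h2 \<and> c1 = c2" using eq by simp
qed simp

lemma card_grp:
  assumes h: "h < d" and dn: "d \<le> n"
  shows "card {j. j < n \<and> grp d j = h} = grp_size n d h"
proof (cases "h = 0")
  case True
  have "{j. j < n \<and> grp d j = h} = insert 0 {d..<n}" using True h dn by (auto simp: grp_def)
  moreover have "0 \<notin> {d..<n}" using h by simp
  ultimately show ?thesis using True dn h by (simp add: grp_size_def)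
next
  case False
  have "{j. j < n \<and> grp d j = h} = {h}" using False h dn by (auto simp: grp_def)
  then show ?thesis using False by (simp add: grp_size_def)
qed

lemma grp_lt: "0 < d \<Longrightarrow> grp d j < d" by (simp add: grp_def)

lemma right_offset_lt:
  fixes g d e :: nat
  assumes "g < d" and "0 < e"
  shows "e * g + (e - 1) < e * d"
proof -
  have "g + 1 \<le> d" using assms(1) by simp
  then have "e * (g + 1) \<le> e * d" by (rule mult_le_mono2)
  with assms(2) show ?thesis by (simp add: algebra_simps)
qed

lemma right_firing_rotor:
  assumes e: "e = 1 \<or> e = 2" and d: "0 < d" "d \<le> b" and g: "g < d"
  shows "card {j. j < b \<and> phase (e * d) (e * grp d j + (e - 1)) t = 0}
       = (if phase (e * d) (e * g) t mod e = e - 1 then grp_size b d ((g + phase (e * d) (e * g) t div e) mod d) else 0)"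
proof -
  let ?x = "phase (e * d) (e * g) t"
  have e0: "e > 0" using e by auto
  have gle: "e * g \<le> e * d" using g by simp
  have tm: "t mod (e * d) = e * ((g + ?x div e) mod d) + ?x mod e"
    using phase_add[OF gle, of t] mod_mult_decompose[OF e0, of g ?x d] by simp
  have phl: "e * grp d j + (e - 1) < e * d" for j using right_offset_lt[OF grp_lt[OF d(1)] e0] .
  have cond: "phase (e * d) (e * grp d j + (e - 1)) t = 0 \<longleftrightarrow> (grp d j = (g + ?x div e) mod d \<and> ?x mod e = e - 1)" for j
  proof -
    have "phase (e * d) (e * grp d j + (e - 1)) t = 0 \<longleftrightarrow> e * ((g + ?x div e) mod d) + ?x mod e = e * grp d j + (e - 1)"
      using phase_zero_iff[OF phl[of j]] tm by simp
    also have "\<dots> \<longleftrightarrow> ((g + ?x div e) mod d = grp d j \<and> ?x mod e = e - 1)"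
      by (rule mult_add_eq_iff) (use e0 in simp_all)
    finally show ?thesis by auto
  qed
  show ?thesis
  proof (cases "?x mod e = e - 1")
    case True
    have "{j. j < b \<and> phase (e * d) (e * grp d j + (e - 1)) t = 0} = {j. j < b \<and> grp d j = (g + ?x div e) mod d}"
      using cond True by auto
    then show ?thesis using True card_grp[of "(g + ?x div e) mod d" d b] d by simp
  next
    case False
    then have "{j. j < b \<and> phase (e * d) (e * grp d j + (e - 1)) t = 0} = {}" using cond by auto
    then show ?thesis using False by simp
  qed
qed

lemma odd_phase_shift:
  fixes x e :: nat
  assumes "e = 1 \<or> e = 2"
  shows "(e - 1 + x) mod e = 0 \<longleftrightarrow> x mod e = e - 1"
    and "x mod e = e - 1 \<Longrightarrow> (e - 1 + x) div e = (e - 1) + x div e"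
  using assms by (auto; presburger)+

lemma left_firing_rotor:
  assumes e: "e = 1 \<or> e = 2" and d: "0 < d" "d \<le> a" and g: "g < d"
  shows "card {i. i < a \<and> phase (e * d) (e * grp d i) t = 0}
       = (if phase (e * d) (e * g + (e - 1)) t mod e = e - 1
          then grp_size a d ((g + (e - 1) + phase (e * d) (e * g + (e - 1)) t div e) mod d) else 0)"
proof -
  let ?x = "phase (e * d) (e * g + (e - 1)) t"
  let ?y = "e - 1 + ?x"
  have e0: "e > 0" using e by auto
  have gle: "e * g + (e - 1) \<le> e * d" using right_offset_lt[OF g e0] by simp
  have h1: "(e * g + (e - 1) + ?x) mod (e * d) = t mod (e * d)" by (rule phase_add[OF gle])
  have h2: "e * g + (e - 1) + ?x = e * g + ?y" by (simp only: add.assoc)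
  have tm: "t mod (e * d) = e * ((g + ?y div e) mod d) + ?y mod e"
  proof -
    have "t mod (e * d) = (e * g + ?y) mod (e * d)" using h1 unfolding h2 by simp
    also have "\<dots> = e * ((g + ?y div e) mod d) + ?y mod e" by (rule mod_mult_decompose[OF e0])
    finally show ?thesis .
  qed
  have phl: "e * grp d i < e * d" for i using grp_lt[OF d(1)] e0 by simp
  have ym: "?y mod e = 0 \<longleftrightarrow> ?x mod e = e - 1" by (rule odd_phase_shift(1)[OF e])
  have yd: "?x mod e = e - 1 \<Longrightarrow> ?y div e = (e - 1) + ?x div e" by (rule odd_phase_shift(2)[OF e])
  have cond: "phase (e * d) (e * grp d i) t = 0 \<longleftrightarrow> ((g + ?y div e) mod d = grp d i \<and> ?y mod e = 0)" for i
  proof -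
    have "phase (e * d) (e * grp d i) t = 0 \<longleftrightarrow> t mod (e * d) = e * grp d i" by (rule phase_zero_iff[OF phl[of i]])
    also have "\<dots> \<longleftrightarrow> e * ((g + ?y div e) mod d) + ?y mod e = e * grp d i + 0" by (simp only: tm add_0_right)
    also have "\<dots> \<longleftrightarrow> ((g + ?y div e) mod d = grp d i \<and> ?y mod e = 0)"
      by (rule mult_add_eq_iff) (use e0 in simp_all)
    finally show ?thesis .
  qed
  show ?thesis
  proof (cases "?x mod e = e - 1")
    case True
    have eqy: "(g + ?y div e) mod d = (g + (e - 1) + ?x div e) mod d" using yd[OF True] by (simp add: add.assoc)
    have ym1: "?y mod e = 0" using ym True by simp
    have cond': "phase (e * d) (e * grp d i) t = 0 \<longleftrightarrow> (g + (e - 1) + ?x div e) mod d = grp d i" for i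
      using cond[of i] ym1 eqy by simp
    have "{i. i < a \<and> phase (e * d) (e * grp d i) t = 0} = {i. i < a \<and> grp d i = (g + (e - 1) + ?x div e) mod d}"
    proof -
      have "{i. i < a \<and> phase (e * d) (e * grp d i) t = 0} = {i. i < a \<and> (g + (e - 1) + ?x div e) mod d = grp d i}"
        using cond' by simp
      also have "\<dots> = {i. i < a \<and> grp d i = (g + (e - 1) + ?x div e) mod d}" by auto
      finally show ?thesis .
    qed
    then show ?thesis using True card_grp[of "(g + (e - 1) + ?x div e) mod d" d a] d by simp
  next
    case False
    then have "{i. i < a \<and> phase (e * d) (e * grp d i) t = 0} = {}" using cond ym by auto
    then show ?thesis using False by simp
  qed
qed

text \<open>The rotor configuration at time t: a left vertex of group g has phase offset e*g and a right vertex
  of group g offset e*g + (e-1); each holds the window of groups of the other side received since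
  its last firing, starting at the group that fires right after it.\<close>

definition rotor_config :: "nat \<Rightarrow> nat \<Rightarrow> nat \<Rightarrow> nat \<Rightarrow> nat \<Rightarrow> nat + nat \<Rightarrow> nat" where
  "rotor_config a b d e t v = (case v of
      Inl i \<Rightarrow> if i < a then window_sum (grp_size b d) d (grp d i)
                               (held_groups e d (phase (e * d) (e * grp d i) t)) else 0
    | Inr j \<Rightarrow> if j < b then window_sum (grp_size a d) d (grp d j + (e - 1))
                               (held_groups e d (phase (e * d) (e * grp d j + (e - 1)) t)) else 0)"

lemma rotor_outside: "v \<notin> Kab_V a b \<Longrightarrow> rotor_config a b d e t v = 0"
  by (cases v) (auto simp: rotor_config_def Kab_V_def)

lemma rotor_fires_left:
  assumes e: "e = 1 \<or> e = 2" and d: "1 \<le> d" "d \<le> b" and i: "i < a"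
  shows "b \<le> rotor_config a b d e t (Inl i) \<longleftrightarrow> phase (e * d) (e * grp d i) t = 0"
proof -
  have "0 < e * d" using e d by auto
  with i show ?thesis
    using window_step(2)[OF e _ grp_size_pos[OF d(2)] grp_size_sum[OF d, symmetric] phase_lt] d
    by (simp add: rotor_config_def)
qed

lemma rotor_fires_right:
  assumes e: "e = 1 \<or> e = 2" and d: "1 \<le> d" "d \<le> a" and j: "j < b"
  shows "a \<le> rotor_config a b d e t (Inr j) \<longleftrightarrow> phase (e * d) (e * grp d j + (e - 1)) t = 0"
proof -
  have "0 < e * d" using e d by auto
  with j show ?thesis
    using window_step(2)[OF e _ grp_size_pos[OF d(2)] grp_size_sum[OF d, symmetric] phase_lt] d
    by (simp add: rotor_config_def)
qed

lemma rotor_step_left: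
  assumes e: "e = 1 \<or> e = 2" and d: "1 \<le> d" "d \<le> a" "d \<le> b" and i: "i < a"
  shows "Kab_step a b (rotor_config a b d e t) (Inl i) = rotor_config a b d e (Suc t) (Inl i)"
proof -
  let ?g = "grp d i"
  let ?x = "phase (e * d) (e * ?g) t"
  have d0: "0 < d" and P0: "0 < e * d" using e d by auto
  have "right_firing a b (rotor_config a b d e t)
      = card {j. j < b \<and> phase (e * d) (e * grp d j + (e - 1)) t = 0}"
    unfolding right_firing_def using rotor_fires_right[OF e d(1,2)] by (metis (lifting))
  also have "\<dots> = (if ?x mod e = e - 1 then grp_size b d ((?g + ?x div e) mod d) else 0)"
    by (rule right_firing_rotor[OF e d0 d(3) grp_lt[OF d0]])
  finally have inflow: "right_firing a b (rotor_config a b d e t) = \<dots>" .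
  have cur: "rotor_config a b d e t (Inl i) = window_sum (grp_size b d) d ?g (held_groups e d ?x)"
    using i by (simp add: rotor_config_def)
  have after: "rotor_config a b d e (Suc t) (Inl i)
      = window_sum (grp_size b d) d ?g (held_groups e d ((?x + 1) mod (e * d)))"
    using i phase_Suc[of "e * ?g" "e * d" t] grp_lt[OF d0, of i] by (simp add: rotor_config_def)
  show ?thesis
    unfolding Kab_step_Inl[OF i] inflow cur after
    by (rule window_step(1)[OF e d0 grp_size_pos[OF d(3)] grp_size_sum[OF d(1,3), symmetric] phase_lt[OF P0]])
qed

lemma rotor_step_right:
  assumes e: "e = 1 \<or> e = 2" and d: "1 \<le> d" "d \<le> a" "d \<le> b" and j: "j < b"
  shows "Kab_step a b (rotor_config a b d e t) (Inr j) = rotor_config a b d e (Suc t) (Inr j)"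
proof -
  let ?g = "grp d j + (e - 1)"
  let ?x = "phase (e * d) (e * grp d j + (e - 1)) t"
  have d0: "0 < d" and e0: "0 < e" and P0: "0 < e * d" using e d by auto
  have "left_firing a b (rotor_config a b d e t) = card {i. i < a \<and> phase (e * d) (e * grp d i) t = 0}"
    unfolding left_firing_def using rotor_fires_left[OF e d(1,3)] by (metis (lifting))
  also have "\<dots> = (if ?x mod e = e - 1 then grp_size a d ((?g + ?x div e) mod d) else 0)"
    by (rule left_firing_rotor[OF e d0 d(2) grp_lt[OF d0]])
  finally have inflow: "left_firing a b (rotor_config a b d e t) = \<dots>" .
  have cur: "rotor_config a b d e t (Inr j) = window_sum (grp_size a d) d ?g (held_groups e d ?x)"
    using j by (simp add: rotor_config_def)
  have after: "rotor_config a b d e (Suc t) (Inr j)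
      = window_sum (grp_size a d) d ?g (held_groups e d ((?x + 1) mod (e * d)))"
    using j phase_Suc[of "e * grp d j + (e - 1)" "e * d" t] right_offset_lt[OF grp_lt[OF d0] e0, of j]
    by (simp add: rotor_config_def)
  show ?thesis
    unfolding Kab_step_Inr[OF j] inflow cur after
    by (rule window_step(1)[OF e d0 grp_size_pos[OF d(2)] grp_size_sum[OF d(1,2), symmetric] phase_lt[OF P0]])
qed

lemma rotor_step:
  assumes e: "e = 1 \<or> e = 2" and d: "1 \<le> d" "d \<le> a" "d \<le> b"
  shows "Kab_step a b (rotor_config a b d e t) = rotor_config a b d e (Suc t)"
  using rotor_step_left[OF e d] rotor_step_right[OF e d] rotor_outside Kab_step_outside[of _ a b 1]
  by (intro Kab_state_eqI[where a=a and b=b]) auto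

lemma rotor_periodic:
  assumes e: "e = 1 \<or> e = 2" and d: "1 \<le> d"
  shows "rotor_config a b d e (t + e * d) = rotor_config a b d e t"
proof
  fix v
  have d0: "0 < d" and e0: "0 < e" using e d by auto
  have left: "e * grp d i \<le> e * d" for i using grp_lt[OF d0, of i] by simp
  have right: "e * grp d j + (e - 1) \<le> e * d" for j using right_offset_lt[OF grp_lt[OF d0] e0, of j] by simp
  show "rotor_config a b d e (t + e * d) v = rotor_config a b d e t v"
  proof (cases v)
    case (Inl i)
    then show ?thesis unfolding rotor_config_def by (simp only: sum.case phase_periodic[OF left])
  next
    case (Inr j)
    then show ?thesis unfolding rotor_config_def by (simp only: sum.case phase_periodic[OF right])
  qed
qed

text \<open>The left vertex 0 fires at time 0 and at no time 0 < k < e*d, so the period is exact.\<close>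

lemma rotor_distinct:
  assumes e: "e = 1 \<or> e = 2" and d: "1 \<le> d" "d \<le> b" and a: "0 < a"
    and k: "0 < k" "k < e * d"
  shows "rotor_config a b d e k \<noteq> rotor_config a b d e 0"
proof -
  have grp0: "grp d 0 = 0" using d by (simp add: grp_def)
  have "phase (e * d) 0 0 = 0" "phase (e * d) 0 k = k" using k by (simp_all add: phase_def)
  then have "b \<le> rotor_config a b d e 0 (Inl 0)" "\<not> b \<le> rotor_config a b d e k (Inl 0)"
    using rotor_fires_left[OF e d a] k by (simp_all add: grp0)
  then show ?thesis by metis
qed

lemma rotor_period:
  assumes a: "0 < a" and e: "e = 1 \<or> e = 2" and d: "1 \<le> d" "d \<le> a" "d \<le> b"
  shows "\<exists>\<sigma> :: nat + nat \<Rightarrow> nat. (\<forall>v. v \<notin> Kab_V a b \<longrightarrow> \<sigma> v = 0) \<and> is_period (Kab_V a b) Kab_E \<sigma> (e * d)"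
proof (intro exI conjI allI impI)
  let ?\<sigma> = "rotor_config a b d e 0"
  show "?\<sigma> v = 0" if "v \<notin> Kab_V a b" for v using rotor_outside[OF that] .
  have orbit: "(Kab_step a b ^^ t) ?\<sigma> = rotor_config a b d e t" for t
    by (induction t) (simp_all add: rotor_step[OF e d])
  show "is_period (Kab_V a b) Kab_E ?\<sigma> (e * d)"
  proof (rule is_period_of_cycle)
    show "0 < e * d" using e d by auto
    show "(Kab_step a b ^^ (e * d)) ?\<sigma> = ?\<sigma>" using rotor_periodic[OF e d(1), of a b 0] by (simp add: orbit)
    show "(Kab_step a b ^^ q) ?\<sigma> \<noteq> ?\<sigma>" if "0 < q" "q < e * d" for q
      using rotor_distinct[OF e d(1,3) a that] by (simp add: orbit)
  qed
qed

theorem theorem3p8: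
  fixes a b p :: nat
  assumes "0 < a" and "0 < b" and "0 < p"
  shows "(\<exists>\<sigma> :: nat + nat \<Rightarrow> nat. (\<forall>v. v \<notin> Kab_V a b \<longrightarrow> \<sigma> v = 0) \<and>
            is_period (Kab_V a b) Kab_E \<sigma> p)
         \<longleftrightarrow> p \<in> {i. 1 \<le> i \<and> i \<le> min a b} \<union> {2 * i | i. 1 \<le> i \<and> i \<le> min a b}"
    (is "?realized \<longleftrightarrow> p \<in> ?periods")
proof
  assume ?realized
  then obtain \<sigma> :: "nat + nat \<Rightarrow> nat" where "is_period (Kab_V a b) Kab_E \<sigma> p" by blast
  then obtain k where "0 < k" "k \<le> min a b" "p dvd 2 * k"
    using period_divides_bounded_double assms(1,2) by blast
  then show "p \<in> ?periods" using divisor_of_bounded_double assms(3) by blast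
next
  assume "p \<in> ?periods"
  then consider "1 \<le> p" "p \<le> min a b" | i where "p = 2 * i" "1 \<le> i" "i \<le> min a b" by blast
  then show ?realized
  proof cases
    case 1
    then show ?thesis using rotor_period[of a 1 p b] assms(1) by simp
  next
    case (2 i)
    then show ?thesis using rotor_period[of a 2 i b] assms(1) by simp
  qed
qed

end
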